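(* Let $G$ be a group with identity $e$, let $A$ be a set with at least two elements, and let $\tau : A^G \to A^G$ be a lazy cellular automaton with unique active transition $p \in A^S$ (where $S \subseteq G$ is finite with $e \in S$) and writing symbol $a \in A \setminus \{ p(e) \}$. Assume that $p$ is quasi-constant with non-constant element $r \in S$. \begin{enumerate} \item If $a \neq p(s)$ for all $s \in S$, then $\mathrm{ord}(\tau)=2$. \item If $r \neq e$ and $a= p(r)$, then $\mathrm{ord}(\tau)$ is finite if and only if there exists $n \geq 2$ such that $r^n \in S$. Moreover, in this case, $\mathrm{ord}(\tau) = \min \{ n \geq 2 : r^n \in S \}$. \item If $r = e$ and $a = p(s)$ for all $s \in S \setminus \{e\}$, then $\mathrm{ord}(\tau)$ is finite if and only if there exists $n \geq 2$ such that for every word $w\in (S\setminus\{e\})^{n-1}$ there exists a subword $v\sqsubseteq w$ with $\theta(v)^{-1}\in S$. In that case, $\mathrm{ord}(\tau)$ is the minimum $n \geq 2$ satisfying this property. \end{enumerate}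
   Context: $A^G$ is the set of all maps $G \to A$, with the shift action $(g\cdot x)(h) := x(hg)$ for $g,h \in G$, $x \in A^G$. A cellular automaton is a map $\tau : A^G \to A^G$ for which there are a finite $S \subseteq G$ and a local map $\mu : A^S \to A$ with $\tau(x)(g) = \mu((g\cdot x)|_S)$ for all $x \in A^G$, $g \in G$. $\tau$ is lazy if there is such a local defining map $\mu : A^S \to A$ with $e \in S$ and a pattern $p \in A^S$ such that for all $z \in A^S$: $\mu(z) = z(e)$ if and only if $z \neq p$; then $p$ is the unique active transition of $\tau$ and $a := \mu(p) \in A \setminus\{p(e)\}$ is its writing symbol. $\tau^k$ denotes the $k$-fold composition ($\tau^0$ the identity), and $\mathrm{ord}(\tau) := |\{\tau^k : k \in \mathbb{N}\}|$ with $\mathbb{N} = \{0,1,2,\dots\}$. A pattern $p \in A^S$ is quasi-constant if $p$ is not constant and there is $r \in S$ such that $p|_{S\setminus\{r\}}$ is constant; such $r$ is the non-constant element of $p$. A word of length $m$ on $T \subseteq G$ is an element $(s_1,\dots,s_m) \in T^m$; $\theta(s_1,\dots,s_m) := s_1 s_2 \cdots s_m \in G$; $v$ is a subword of $w=(s_1,\dots,s_m)$, written $v \sqsubseteq w$, if $v = (s_i, s_{i+1},\dots,s_j)$ for some $1 \le i \le j \le m$. *)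

theory Defs
  imports Main "HOL-Library.FuncSet" "HOL-Library.Sublist"
begin

text \<open>The group G is a type of class group_add (operation written +, identity 0,
  inverse -); the alphabet A is a type 'a.
  Patterns in A^S are functions in extensional S (value undefined outside S).\<close>

definition shift :: "'g::group_add \<Rightarrow> ('g \<Rightarrow> 'a) \<Rightarrow> ('g \<Rightarrow> 'a)" where
  "shift g x = (\<lambda>h. x (h + g))"

definition local_defining_map ::
  "(('g::group_add \<Rightarrow> 'a) \<Rightarrow> ('g \<Rightarrow> 'a)) \<Rightarrow> 'g set \<Rightarrow> (('g \<Rightarrow> 'a) \<Rightarrow> 'a) \<Rightarrow> bool" where
  "local_defining_map \<tau> S \<mu> \<longleftrightarrow> finite S \<and> (\<forall>x g. \<tau> x g = \<mu> (restrict (shift g x) S))"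

definition lazy_with ::
  "(('g::group_add \<Rightarrow> 'a) \<Rightarrow> ('g \<Rightarrow> 'a)) \<Rightarrow> 'g set \<Rightarrow> (('g \<Rightarrow> 'a) \<Rightarrow> 'a) \<Rightarrow> ('g \<Rightarrow> 'a) \<Rightarrow> bool" where
  "lazy_with \<tau> S \<mu> p \<longleftrightarrow> local_defining_map \<tau> S \<mu> \<and> 0 \<in> S \<and> p \<in> extensional S \<and>
     (\<forall>z \<in> extensional S. (\<mu> z = z 0 \<longleftrightarrow> z \<noteq> p))"

definition powers_set :: "('b \<Rightarrow> 'b) \<Rightarrow> ('b \<Rightarrow> 'b) set" where
  "powers_set \<tau> = {\<tau> ^^ k | k. True}"

definition ord :: "('b \<Rightarrow> 'b) \<Rightarrow> nat" where
  "ord \<tau> = card (powers_set \<tau>)"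

definition constant_on_set :: "'g set \<Rightarrow> ('g \<Rightarrow> 'a) \<Rightarrow> bool" where
  "constant_on_set S p \<longleftrightarrow> (\<exists>c. \<forall>s\<in>S. p s = c)"

definition quasi_constant_at :: "'g set \<Rightarrow> ('g \<Rightarrow> 'a) \<Rightarrow> 'g \<Rightarrow> bool" where
  "quasi_constant_at S p r \<longleftrightarrow> r \<in> S \<and> \<not> constant_on_set S p \<and> constant_on_set (S - {r}) p"

definition gpow :: "nat \<Rightarrow> 'g::group_add \<Rightarrow> 'g" where
  "gpow n r = sum_list (replicate n r)"

definition theta :: "'g::group_add list \<Rightarrow> 'g" where
  "theta w = sum_list w"

text \<open>v is a subword of w: a nonempty contiguous block.\<close>
definition subword :: "'g list \<Rightarrow> 'g list \<Rightarrow> bool" where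
  "subword v w \<longleftrightarrow> v \<noteq> [] \<and> sublist v w"

definition word_property :: "'g::group_add set \<Rightarrow> nat \<Rightarrow> bool" where
  "word_property S n \<longleftrightarrow> (\<forall>w. length w = n - 1 \<and> set w \<subseteq> S - {0} \<longrightarrow>
      (\<exists>v. subword v w \<and> - theta v \<in> S))"

end

(* A lazy automaton only ever rewrites a cell holding p(e) into the writing symbol a, and a cell
   holding a keeps it.  So every cell changes at most once, the powers of tau never cycle, and
   ord(tau) - 1 is the first m with tau^(m+1) = tau^m.  A change at step k + 1 at g requires a change
   at step k at s g for some s in S - {e} with p(s) = a; a change at step n - 1 therefore comes with
   a chain of earlier changes along a word of length n - 1 over such s.  In the three cases this
   word must be empty, a power of r, or any word over S - {e}.  The chain is blocked exactly when
   r^n lies in S, resp. when every such word has a subword v with theta(v)^-1 in S; otherwise a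
   configuration taking only the values a and p(e) realises it. *)

theory Submission
  imports Defs
begin

lemma gpow_0 [simp]: "gpow 0 r = 0"
  by (simp add: gpow_def)

lemma gpow_Suc [simp]: "gpow (Suc n) r = r + gpow n r"
  by (simp add: gpow_def)

lemma gpow_add: "gpow (m + n) r = gpow m r + gpow n r"
  by (simp add: gpow_def replicate_add)

lemma gpow_diff: "m \<le> n \<Longrightarrow> gpow n r - gpow m r = gpow (n - m) r"
  using gpow_add[of "n - m" m r] by (simp add: algebra_simps)

lemma gpow_eq_theta_replicate: "gpow n r = theta (replicate n r)"
  by (simp add: gpow_def theta_def)

lemma theta_Nil [simp]: "theta [] = 0"
  and theta_singleton [simp]: "theta [s] = s"
  and theta_append: "theta (v @ w) = theta v + theta w"
  by (simp_all add: theta_def)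

lemma theta_drop_nth: "k < length w \<Longrightarrow> theta (drop k w) = w ! k + theta (drop (Suc k) w)"
  by (simp add: theta_def Cons_nth_drop_Suc[symmetric])

lemma theta_drop_split_subword:
  assumes "k < m" "m \<le> length w"
  shows "\<exists>v. subword v w \<and> theta (drop k w) = theta v + theta (drop m w)"
proof (intro exI conjI)
  let ?v = "take (m - k) (drop k w)"
  have "drop k w = ?v @ drop m w"
    using assms by (metis append_take_drop_id drop_drop le_add_diff_inverse2 less_imp_le)
  then show "theta (drop k w) = theta ?v + theta (drop m w)"
    by (metis theta_append)
  have "sublist ?v w"
    using sublist_order.order.trans[OF sublist_take sublist_drop] by blast
  moreover have "?v \<noteq> []"
    using assms by simp
  ultimately show "subword ?v w"
    by (simp add: subword_def)
qed

lemma subword_theta_drop: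
  assumes "subword v w"
  obtains k m where "k < m" "m \<le> length w" "theta (drop k w) = theta v + theta (drop m w)"
proof -
  obtain ps ss where w: "w = ps @ v @ ss" and "v \<noteq> []"
    using assms unfolding subword_def sublist_def by blast
  then show thesis
    by (intro that[of "length ps" "length ps + length v"]) (auto simp: theta_append add.assoc)
qed

lemma funpow_eq_if_fixed:
  fixes f :: "'a \<Rightarrow> 'a"
  assumes fixed: "f ^^ Suc m = f ^^ m"
  shows "m \<le> k \<Longrightarrow> f ^^ k = f ^^ m"
proof (induction k rule: dec_induct)
  case (step n)
  have "f ^^ Suc n = f \<circ> f ^^ m"
    using step.IH by simp
  then show ?case
    using fixed by simp
qed simp

lemma powers_set_eq_image_if_fixed:
  fixes f :: "'a \<Rightarrow> 'a"
  assumes "f ^^ Suc m = f ^^ m"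
  shows "powers_set f = (\<lambda>k. f ^^ k) ` {..m}"
proof -
  have "f ^^ k = f ^^ min k m" for k
    using funpow_eq_if_fixed[OF assms, of k] by (cases "m \<le> k") auto
  then show ?thesis
    unfolding powers_set_def by (auto intro!: image_eqI[of _ _ "min _ m"])
qed

lemma funpow_orbit:
  assumes "\<And>i. i < k \<Longrightarrow> f (X i) = X (Suc i)"
  shows "(f ^^ k) (X 0) = X k"
  using assms by (induction k) auto

lemma powers_set_eq_range: "powers_set f = range (\<lambda>k. f ^^ k)"
  by (auto simp: powers_set_def)

context
  fixes f :: "'b \<Rightarrow> 'b"
  assumes no_cycle: "\<And>m m'. m < m' \<Longrightarrow> f ^^ m = f ^^ m' \<Longrightarrow> f ^^ Suc m = f ^^ m"
begin

lemma finite_powers_set_iff_fixed: "finite (powers_set f) \<longleftrightarrow> (\<exists>m. f ^^ Suc m = f ^^ m)"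
proof
  assume fin: "finite (powers_set f)"
  show "\<exists>m. f ^^ Suc m = f ^^ m"
  proof (rule ccontr)
    assume none: "\<nexists>m. f ^^ Suc m = f ^^ m"
    have "inj (\<lambda>k. f ^^ k)"
    proof (rule injI)
      fix i j
      assume "f ^^ i = f ^^ j"
      then show "i = j"
        using no_cycle none by (cases i j rule: linorder_cases) metis+
    qed
    then show False
      using fin by (simp add: powers_set_eq_range finite_image_iff)
  qed
next
  assume "\<exists>m. f ^^ Suc m = f ^^ m"
  then obtain m where "f ^^ Suc m = f ^^ m" ..
  then show "finite (powers_set f)"
    by (simp only: powers_set_eq_image_if_fixed finite_imageI finite_atMost)
qed

lemma ord_eq_Suc_first_fixed:
  assumes fixed: "f ^^ Suc M = f ^^ M" and moving: "\<And>m. m < M \<Longrightarrow> f ^^ Suc m \<noteq> f ^^ m"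
  shows "ord f = Suc M"
proof -
  have "inj_on (\<lambda>k. f ^^ k) {..M}"
  proof (rule inj_onI)
    have "f ^^ i \<noteq> f ^^ j" if "i < j" "j \<le> M" for i j
      using no_cycle[OF that(1)] moving[of i] that by auto
    then show "i = j" if "i \<in> {..M}" "j \<in> {..M}" "f ^^ i = f ^^ j" for i j
      using that by (cases i j rule: linorder_cases) (simp_all, metis)
  qed
  then show ?thesis
    by (simp add: ord_def card_image powers_set_eq_image_if_fixed[OF fixed])
qed

context
  fixes Q :: "nat \<Rightarrow> bool"
  assumes stops: "\<And>n. 2 \<le> n \<Longrightarrow> Q n \<Longrightarrow> f ^^ n = f ^^ (n - 1)"
    and moves: "\<And>t. \<forall>k. 2 \<le> k \<and> k \<le> Suc t \<longrightarrow> \<not> Q k \<Longrightarrow> f ^^ Suc t \<noteq> f ^^ t"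
begin

lemma finite_powers_set_iff_threshold: "finite (powers_set f) \<longleftrightarrow> (\<exists>n\<ge>2. Q n)"
proof
  assume "finite (powers_set f)"
  then obtain m where "f ^^ Suc m = f ^^ m"
    by (auto simp only: finite_powers_set_iff_fixed)
  then show "\<exists>n\<ge>2. Q n"
    using moves[of m] by blast
next
  assume "\<exists>n\<ge>2. Q n"
  then obtain n where "2 \<le> n" "Q n" by blast
  then have "f ^^ Suc (n - 1) = f ^^ (n - 1)"
    using stops by simp
  then show "finite (powers_set f)"
    by (auto simp only: finite_powers_set_iff_fixed)
qed

lemma ord_eq_LEAST_threshold:
  assumes "\<exists>n\<ge>2. Q n"
  shows "ord f = (LEAST n. 2 \<le> n \<and> Q n)"
proof -
  define n where "n = (LEAST n. 2 \<le> n \<and> Q n)"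
  have n: "2 \<le> n" "Q n"
    using LeastI_ex[of "\<lambda>n. 2 \<le> n \<and> Q n"] assms unfolding n_def by auto
  have "k < n \<Longrightarrow> \<not> (2 \<le> k \<and> Q k)" for k
    unfolding n_def by (rule not_less_Least)
  then have "f ^^ Suc m \<noteq> f ^^ m" if "m < n - 1" for m
    using that by (intro moves) auto
  moreover have "f ^^ Suc (n - 1) = f ^^ (n - 1)"
    using stops[OF n] n(1) by simp
  ultimately have "ord f = Suc (n - 1)"
    by (intro ord_eq_Suc_first_fixed)
  then show ?thesis
    using n(1) unfolding n_def by simp
qed

end

end

locale lazy_ca =
  fixes \<tau> :: "('g::group_add \<Rightarrow> 'a) \<Rightarrow> 'g \<Rightarrow> 'a" and S :: "'g set"
    and p :: "'g \<Rightarrow> 'a" and a :: 'a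
  assumes lazy_step: "\<tau> y g = (if \<forall>s\<in>S. y (s + g) = p s then a else y g)"
    and writing_ne: "a \<noteq> p 0"
    and zero_in_S: "0 \<in> S"
begin

lemma tau_eq_if_match: "(\<And>s. s \<in> S \<Longrightarrow> y (s + g) = p s) \<Longrightarrow> \<tau> y g = a"
  by (simp add: lazy_step)

lemma tau_eq_if_mismatch: "s \<in> S \<Longrightarrow> y (s + g) \<noteq> p s \<Longrightarrow> \<tau> y g = y g"
  using lazy_step by auto

lemma match_if_tau_ne: "\<tau> y g \<noteq> y g \<Longrightarrow> s \<in> S \<Longrightarrow> y (s + g) = p s"
  using tau_eq_if_mismatch by blast

lemma tau_eq_writing_if_ne: "\<tau> y g \<noteq> y g \<Longrightarrow> \<tau> y g = a"
  using match_if_tau_ne tau_eq_if_match by blast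

lemma tau_keeps_writing: "y g = a \<Longrightarrow> \<tau> y g = a"
  using match_if_tau_ne[OF _ zero_in_S, of y g] writing_ne by auto

lemma funpow_keeps_writing:
  assumes "(\<tau> ^^ i) x g = a"
  shows "i \<le> j \<Longrightarrow> (\<tau> ^^ j) x g = a"
  by (induction j rule: dec_induct) (simp_all add: assms tau_keeps_writing)

definition changes_at :: "('g \<Rightarrow> 'a) \<Rightarrow> nat \<Rightarrow> 'g \<Rightarrow> bool" where
  "changes_at x k g \<longleftrightarrow> (\<tau> ^^ Suc k) x g \<noteq> (\<tau> ^^ k) x g"

lemma changes_at_match: "changes_at x k g \<Longrightarrow> s \<in> S \<Longrightarrow> (\<tau> ^^ k) x (s + g) = p s"
  unfolding changes_at_def by (intro match_if_tau_ne) simp_all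

lemma changes_at_after:
  assumes "changes_at x k g" "k < j"
  shows "(\<tau> ^^ j) x g = a"
proof (rule funpow_keeps_writing)
  show "(\<tau> ^^ Suc k) x g = a"
    using assms(1) tau_eq_writing_if_ne by (simp add: changes_at_def)
qed (use assms(2) in simp)

lemma changes_at_before:
  assumes "changes_at x k g" "j \<le> k"
  shows "(\<tau> ^^ j) x g \<noteq> a"
proof
  assume "(\<tau> ^^ j) x g = a"
  then have "(\<tau> ^^ k) x g = a"
    using funpow_keeps_writing assms(2) by blast
  moreover have "(\<tau> ^^ k) x g = p 0"
    using changes_at_match[OF assms(1) zero_in_S] by simp
  ultimately show False
    using writing_ne by simp
qed

lemma changes_at_unique:
  assumes "changes_at x k g" "changes_at x m g"
  shows "k = m"
proof -
  have "\<not> i < j" if "changes_at x i g" "changes_at x j g" for i j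
    using changes_at_after[OF that(1), of j] changes_at_before[OF that(2), of j] by auto
  then show ?thesis
    using assms by (meson linorder_neqE_nat)
qed

lemma no_cycle:
  assumes "m < m'" "\<tau> ^^ m = \<tau> ^^ m'"
  shows "\<tau> ^^ Suc m = \<tau> ^^ m"
proof (intro ext)
  fix x g
  show "(\<tau> ^^ Suc m) x g = (\<tau> ^^ m) x g"
  proof (rule ccontr)
    assume "\<not> ?thesis"
    then have "changes_at x m g"
      by (simp add: changes_at_def)
    then show False
      using changes_at_after[of x m g m'] changes_at_before[of x m g m] assms by simp
  qed
qed

text \<open>Otherwise the neighbourhood of g would already have matched p one step earlier,
  and g would have changed then.\<close>
lemma changes_at_Suc:
  assumes "changes_at x (Suc k) g"
  obtains s where "s \<in> S" "s \<noteq> 0" "p s = a" "changes_at x k (s + g)"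
proof -
  define y where "y = (\<tau> ^^ k) x"
  have changed: "\<tau> (\<tau> y) g \<noteq> \<tau> y g"
    using assms by (simp add: changes_at_def y_def)
  have "\<tau> y g = p 0"
    using match_if_tau_ne[OF changed zero_in_S] by simp
  then have "\<tau> y g \<noteq> a"
    using writing_ne by simp
  then obtain s where s: "s \<in> S" and "y (s + g) \<noteq> p s"
    using tau_eq_if_match by blast
  then have "\<tau> y (s + g) \<noteq> y (s + g)" "\<tau> y (s + g) = p s"
    using match_if_tau_ne[OF changed s] by simp_all
  moreover have "\<tau> y (s + g) = a"
    using calculation(1) by (rule tau_eq_writing_if_ne)
  ultimately show thesis
    using s writing_ne by (intro that[of s]) (auto simp: changes_at_def y_def)
qed

lemma changes_at_chain:
  "changes_at x t g \<Longrightarrow> \<exists>w. length w = t \<and> set w \<subseteq> {s \<in> S. s \<noteq> 0 \<and> p s = a}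
     \<and> (\<forall>k\<le>t. changes_at x k (theta (drop k w) + g))"
proof (induction t arbitrary: g)
  case 0
  then show ?case by simp
next
  case (Suc t)
  obtain s where s: "s \<in> S" "s \<noteq> 0" "p s = a" and "changes_at x t (s + g)"
    using changes_at_Suc[OF Suc.prems] .
  then obtain w where w: "length w = t" "set w \<subseteq> {s \<in> S. s \<noteq> 0 \<and> p s = a}"
    and chain: "\<forall>k\<le>t. changes_at x k (theta (drop k w) + (s + g))"
    using Suc.IH by blast
  have "changes_at x k (theta (drop k (w @ [s])) + g)" if "k \<le> Suc t" for k
  proof (cases "k = Suc t")
    case True
    then show ?thesis using Suc.prems w(1) by simp
  next
    case False
    then show ?thesis
      using chain that w(1) by (simp add: theta_append add.assoc)
  qed
  then show ?case
    using w s by (intro exI[of _ "w @ [s]"]) auto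
qed

lemma changes_at_later_offset:
  assumes "changes_at x k (c + h)" "changes_at x m h" "k < m" "- c \<in> S"
  shows "- c \<noteq> 0" "p (- c) \<noteq> a"
proof -
  show "- c \<noteq> 0"
    using changes_at_unique[OF assms(1)] assms(2,3) by force
  have "(\<tau> ^^ k) x h = p (- c)"
    using changes_at_match[OF assms(1,4)] by (simp add: add.assoc[symmetric])
  then show "p (- c) \<noteq> a"
    using changes_at_before[OF assms(2), of k] assms(3) by simp
qed

lemma tau_ne_id: "\<tau> \<noteq> id"
proof
  assume "\<tau> = id"
  define x where "x h = (if h \<in> S then p h else p 0)" for h
  have "\<tau> x 0 = a"
    by (rule tau_eq_if_match) (simp add: x_def)
  then show False
    using \<open>\<tau> = id\<close> writing_ne zero_in_S by (simp add: x_def)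
qed

lemma ord_eq_2_if_writing_not_in_pattern:
  assumes "\<forall>s\<in>S. a \<noteq> p s"
  shows "ord \<tau> = 2"
proof -
  have "\<not> changes_at x (Suc 0) g" for x g
  proof
    assume "changes_at x (Suc 0) g"
    then obtain s where "s \<in> S" "p s = a"
      by (rule changes_at_Suc)
    with assms show False
      by auto
  qed
  then have "\<tau> ^^ Suc (Suc 0) = \<tau> ^^ Suc 0"
    unfolding changes_at_def by (blast intro: ext)
  then have "ord \<tau> = Suc (Suc 0)"
    using tau_ne_id by (intro ord_eq_Suc_first_fixed no_cycle) auto
  then show ?thesis
    by simp
qed

definition indicator_config :: "'g set \<Rightarrow> 'g \<Rightarrow> 'a" where
  "indicator_config D h = (if h \<in> D then a else p 0)"

definition grow :: "'g set \<Rightarrow> 'g set" where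
  "grow D = D \<union> {g. \<forall>s\<in>S. s + g \<in> D \<longleftrightarrow> p s = a}"

context
  assumes two_valued: "\<And>s. s \<in> S \<Longrightarrow> p s = a \<or> p s = p 0"
begin

lemma tau_indicator_config: "\<tau> (indicator_config D) = indicator_config (grow D)"
proof
  fix g
  have "indicator_config D (s + g) = p s \<longleftrightarrow> (s + g \<in> D \<longleftrightarrow> p s = a)" if "s \<in> S" for s
    using two_valued[OF that] writing_ne by (auto simp: indicator_config_def)
  then show "\<tau> (indicator_config D) g = indicator_config (grow D) g"
    by (auto simp: lazy_step grow_def indicator_config_def)
qed

lemma funpow_ne_if_grow_ne:
  assumes "(grow ^^ Suc t) D \<noteq> (grow ^^ t) D"
  shows "\<tau> ^^ Suc t \<noteq> \<tau> ^^ t"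
proof
  have iterate: "(\<tau> ^^ k) (indicator_config D) = indicator_config ((grow ^^ k) D)" for k
    by (induction k) (simp_all add: tau_indicator_config)
  have "inj indicator_config"
    using writing_ne by (intro injI) (auto simp: indicator_config_def fun_eq_iff; metis)
  moreover assume "\<tau> ^^ Suc t = \<tau> ^^ t"
  then have "indicator_config ((grow ^^ Suc t) D) = indicator_config ((grow ^^ t) D)"
    by (simp only: iterate[symmetric])
  ultimately show False
    using assms by (simp add: inj_eq)
qed

end

end

locale lazy_ca_power = lazy_ca +
  fixes r
  assumes r_ne_0: "r \<noteq> 0" and r_in_S: "r \<in> S" and p_r: "p r = a"
    and p_other: "\<And>s. s \<in> S \<Longrightarrow> s \<noteq> r \<Longrightarrow> p s = p 0"
begin

lemma p_eq_writing_iff: "s \<in> S \<Longrightarrow> p s = a \<longleftrightarrow> s = r"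
  using p_other[of s] p_r writing_ne by (cases "s = r") auto

lemma changes_at_power:
  assumes "changes_at x t g"
  shows "changes_at x 0 (gpow t r + g)"
proof -
  obtain w where w: "length w = t" "set w \<subseteq> {s \<in> S. s \<noteq> 0 \<and> p s = a}"
    and "changes_at x 0 (theta w + g)"
    using changes_at_chain[OF assms] by fastforce
  moreover have "replicate t r = w"
    using w p_eq_writing_iff by (intro replicate_length_same[of w r, simplified w(1)]) blast
  ultimately show ?thesis
    by (simp add: gpow_eq_theta_replicate)
qed

text \<open>Tracing a change at step n - 1 back to step 0 shows that x already held a at
  r^n g; if r^n \<in> S, this a must sit where p has it, which forces r^n = r.\<close>
lemma funpow_stops:
  assumes "2 \<le> n" "gpow n r \<in> S"
  shows "\<tau> ^^ n = \<tau> ^^ (n - 1)"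
proof -
  obtain m where n: "n = Suc m" and "1 \<le> m"
    using assms(1) by (cases n) auto
  have "\<not> changes_at x m g" for x g
  proof
    assume changes: "changes_at x m g"
    have first: "changes_at x 0 (gpow m r + g)"
      by (rule changes_at_power[OF changes])
    have "gpow n r + g = r + (gpow m r + g)"
      by (simp add: n add.assoc)
    then have "(\<tau> ^^ 0) x (gpow n r + g) = a"
      using changes_at_match[OF first r_in_S] p_r by simp
    then have "(\<tau> ^^ m) x (gpow n r + g) = a"
      by (rule funpow_keeps_writing) simp
    then have "p (gpow n r) = a"
      using changes_at_match[OF changes assms(2)] by simp
    then have "gpow n r = r"
      using p_eq_writing_iff assms(2) by blast
    then have "gpow m r = 0"
      using n add_left_cancel[of r "gpow m r" 0] by simp
    then have "gpow m r + g = g"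
      by simp
    then have "changes_at x 0 g"
      using first by simp
    then show False
      using changes_at_unique[OF _ changes] \<open>1 \<le> m\<close> by fastforce
  qed
  then have "\<tau> ^^ Suc m = \<tau> ^^ m"
    unfolding changes_at_def by (intro ext) blast
  then show ?thesis
    using n by simp
qed

context
  fixes t :: nat
  assumes no_small_power: "\<forall>k. 2 \<le> k \<and> k \<le> Suc t \<longrightarrow> gpow k r \<notin> S"
begin

lemma offset_power_eq_r:
  assumes "s \<in> S" "s + gpow i r = gpow j r" "i < j" "j \<le> i + Suc t"
  shows "s = r"
proof -
  have s: "s = gpow (j - i) r"
    using assms(2,3) gpow_diff[of i j r] by (simp add: algebra_simps)
  have "j - i = 1"
  proof (rule ccontr)
    assume "j - i \<noteq> 1"
    then have "2 \<le> j - i" "j - i \<le> Suc t"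
      using assms(3,4) by auto
    then show False
      using no_small_power s assms(1) by blast
  qed
  then show ?thesis
    using s by simp
qed

lemma grow_power_block:
  assumes "i \<le> t"
  shows "grow ((\<lambda>j. gpow j r) ` {Suc i..Suc t}) = (\<lambda>j. gpow j r) ` {i..Suc t}"
    (is "grow (?E (Suc i)) = ?E i")
proof
  show "grow (?E (Suc i)) \<subseteq> ?E i"
  proof
    fix g
    assume "g \<in> grow (?E (Suc i))"
    then consider "g \<in> ?E (Suc i)" | "\<forall>s\<in>S. s + g \<in> ?E (Suc i) \<longleftrightarrow> p s = a"
      unfolding grow_def by blast
    then show "g \<in> ?E i"
    proof cases
      case matched: 2
      then have "r + g \<in> ?E (Suc i)"
        using r_in_S p_r by blast
      then obtain j' where j': "r + g = gpow j' r" "Suc i \<le> j'" "j' \<le> Suc t"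
        by auto
      then obtain j where "j' = Suc j"
        by (cases j') auto
      with j' have "g = gpow j r" "i \<le> j" "j \<le> t"
        by auto
      moreover have "g \<notin> ?E (Suc i)"
        using matched zero_in_S writing_ne by force
      ultimately show ?thesis
        by (auto simp: le_Suc_eq)
    qed auto
  qed
next
  have "s + gpow i r \<in> ?E (Suc i) \<longleftrightarrow> s = r" if "s \<in> S" for s
  proof
    assume "s + gpow i r \<in> ?E (Suc i)"
    then obtain j where "s + gpow i r = gpow j r" "i < j" "j \<le> i + Suc t"
      by auto
    then show "s = r"
      using offset_power_eq_r[OF that] by blast
  qed (use assms in \<open>force intro: image_eqI[where x = "Suc i"]\<close>)
  then have "gpow i r \<in> grow (?E (Suc i))"
    using p_eq_writing_iff by (auto simp: grow_def)
  moreover have "?E i = insert (gpow i r) (?E (Suc i))"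
    using assms by (simp add: atLeastAtMost_insertL[symmetric])
  ultimately show "?E i \<subseteq> grow (?E (Suc i))"
    by (auto simp: grow_def)
qed

text \<open>Starting with a exactly on r^(t+1), the cells holding a form the block
  r^(t+1-i), ..., r^(t+1) after i steps, so e is reached only at step t + 1.\<close>
lemma funpow_moves: "\<tau> ^^ Suc t \<noteq> \<tau> ^^ t"
proof (rule funpow_ne_if_grow_ne)
  show "p s = a \<or> p s = p 0" if "s \<in> S" for s
    using p_other[OF that] p_r by blast
  define E where "E i = (\<lambda>j. gpow j r) ` {Suc t - i..Suc t}" for i
  have "grow (E i) = E (Suc i)" if "i < Suc t" for i
  proof -
    have "Suc t - i = Suc (t - i)" "Suc t - Suc i = t - i"
      using that by auto
    then show ?thesis
      using grow_power_block[of "t - i"] by (simp add: E_def)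
  qed
  then have "(grow ^^ k) (E 0) = E k" if "k \<le> Suc t" for k
    using that by (intro funpow_orbit) auto
  moreover have "0 \<in> E (Suc t)"
    unfolding E_def by force
  moreover have "0 \<notin> E t"
  proof
    assume "0 \<in> E t"
    then obtain j where "0 + gpow 0 r = gpow j r" "0 < j" "j \<le> 0 + Suc t"
      by (auto simp: E_def)
    then show False
      using offset_power_eq_r[OF zero_in_S] r_ne_0 by blast
  qed
  ultimately show "(grow ^^ Suc t) (E 0) \<noteq> (grow ^^ t) (E 0)"
    by (metis le_SucI order_refl)
qed

end

lemma finite_powers_set_iff_power_in_S: "finite (powers_set \<tau>) \<longleftrightarrow> (\<exists>n\<ge>2. gpow n r \<in> S)"
  by (rule finite_powers_set_iff_threshold[OF no_cycle funpow_stops funpow_moves])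

lemma ord_eq_least_power_in_S:
  "\<exists>n\<ge>2. gpow n r \<in> S \<Longrightarrow> ord \<tau> = (LEAST n. 2 \<le> n \<and> gpow n r \<in> S)"
  by (rule ord_eq_LEAST_threshold[OF no_cycle funpow_stops funpow_moves])

end

locale lazy_ca_word = lazy_ca +
  assumes p_nonzero: "\<And>s. s \<in> S \<Longrightarrow> s \<noteq> 0 \<Longrightarrow> p s = a"
begin

lemma p_eq_writing_iff: "s \<in> S \<Longrightarrow> p s = a \<longleftrightarrow> s \<noteq> 0"
  using p_nonzero writing_ne by auto

text \<open>Tracing a change at step n - 1 back yields a word w of length n - 1 whose suffix
  sums h_k change at step k. If a subword v spans the suffixes k < k', then h_k' is the
  neighbour -theta v of h_k, so it holds p (-theta v) = a when h_k changes, yet it changes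
  later.\<close>
lemma funpow_stops:
  assumes "2 \<le> n" "word_property S n"
  shows "\<tau> ^^ n = \<tau> ^^ (n - 1)"
proof -
  obtain m where n: "n = Suc m"
    using assms(1) by (cases n) auto
  have "\<not> changes_at x m g" for x g
  proof
    assume "changes_at x m g"
    then obtain w where w: "length w = m" "set w \<subseteq> {s \<in> S. s \<noteq> 0 \<and> p s = a}"
      and chain: "\<forall>k\<le>m. changes_at x k (theta (drop k w) + g)"
      using changes_at_chain by blast
    moreover have "set w \<subseteq> S - {0}"
      using w(2) by auto
    ultimately obtain v where "subword v w" and v_in_S: "- theta v \<in> S"
      using assms(2) n unfolding word_property_def by auto
    then obtain k k' where k: "k < k'" "k' \<le> m"
      and split: "theta (drop k w) = theta v + theta (drop k' w)"
      using w(1) by (blast elim: subword_theta_drop)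
    have "changes_at x k (theta (drop k w) + g)"
      using chain k by simp
    then have "changes_at x k (theta v + (theta (drop k' w) + g))"
      by (simp add: split add.assoc)
    moreover have "changes_at x k' (theta (drop k' w) + g)"
      using chain k by simp
    ultimately have "- theta v \<noteq> 0" "p (- theta v) \<noteq> a"
      using changes_at_later_offset k(1) v_in_S by blast+
    then show False
      using p_nonzero v_in_S by blast
  qed
  then have "\<tau> ^^ Suc m = \<tau> ^^ m"
    unfolding changes_at_def by (intro ext) blast
  then show ?thesis
    using n by simp
qed

context
  fixes w
  assumes w_in: "set w \<subseteq> S - {0}"
    and no_return: "\<And>v. subword v w \<Longrightarrow> - theta v \<notin> S"
begin

lemma grow_complement_suffix_sums:
  assumes "i \<le> length w"
  shows "grow (- (\<lambda>k. theta (drop k w)) ` {i..length w})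
    = - (\<lambda>k. theta (drop k w)) ` {Suc i..length w}"
    (is "grow (- ?C i) = - ?C (Suc i)")
proof
  have "?C (Suc i) \<subseteq> ?C i"
    by auto
  moreover have "g \<notin> ?C (Suc i)" if matched: "\<forall>s\<in>S. s + g \<in> - ?C i \<longleftrightarrow> p s = a" for g
  proof
    assume "g \<in> ?C (Suc i)"
    then obtain k' where k': "g = theta (drop k' w)" "Suc i \<le> k'" "k' \<le> length w"
      by auto
    then obtain k where "k' = Suc k"
      by (cases k') auto
    with k' have k: "g = theta (drop (Suc k) w)" "i \<le> k" "k < length w"
      by auto
    then have "w ! k \<in> S - {0}"
      using w_in nth_mem by blast
    moreover have "w ! k + g \<in> ?C i"
      using k by (auto simp: theta_drop_nth intro!: image_eqI[where x = k])
    ultimately show False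
      using matched p_nonzero by auto
  qed
  ultimately show "grow (- ?C i) \<subseteq> - ?C (Suc i)"
    by (auto simp: grow_def)
next
  have "s + theta (drop i w) \<notin> ?C i" if "s \<in> S" "s \<noteq> 0" for s
  proof
    assume "s + theta (drop i w) \<in> ?C i"
    then obtain m where m: "s + theta (drop i w) = theta (drop m w)" "i \<le> m" "m \<le> length w"
      by auto
    show False
    proof (cases "m = i")
      case True
      then show False
        using m(1) \<open>s \<noteq> 0\<close> add_right_cancel[of s "theta (drop i w)" 0] by simp
    next
      case False
      then obtain v where "subword v w" "theta (drop i w) = theta v + theta (drop m w)"
        using theta_drop_split_subword m(2,3) by (metis le_neq_implies_less)
      then have "(s + theta v) + theta (drop m w) = 0 + theta (drop m w)"
        using m(1) by (simp add: add.assoc)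
      then have "s + theta v = 0"
        by (simp only: add_right_cancel)
      then have "s = - theta v"
        by (simp add: eq_neg_iff_add_eq_0)
      then show False
        using \<open>s \<in> S\<close> no_return \<open>subword v w\<close> by simp
    qed
  qed
  then have "theta (drop i w) \<in> grow (- ?C i)"
    using assms p_eq_writing_iff by (auto simp: grow_def)
  moreover have "?C i = insert (theta (drop i w)) (?C (Suc i))"
    using assms by (simp add: atLeastAtMost_insertL[symmetric])
  ultimately show "- ?C (Suc i) \<subseteq> grow (- ?C i)"
    by (auto simp: grow_def)
qed

text \<open>Starting with p e exactly on the suffix sums of w, each step writes a on the
  longest remaining suffix sum only, so the empty suffix sum e is reached at step
  length w + 1.\<close>
lemma funpow_moves_of_word: "\<tau> ^^ Suc (length w) \<noteq> \<tau> ^^ length w"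
proof (rule funpow_ne_if_grow_ne)
  show "p s = a \<or> p s = p 0" if "s \<in> S" for s
    using p_nonzero[OF that] by blast
  define F where "F i = - (\<lambda>k. theta (drop k w)) ` {i..length w}" for i
  have "(grow ^^ k) (F 0) = F k" if "k \<le> Suc (length w)" for k
    using that by (intro funpow_orbit) (simp add: F_def grow_complement_suffix_sums)
  moreover have "0 \<notin> F (length w)" "0 \<in> F (Suc (length w))"
    by (auto simp: F_def)
  ultimately show "(grow ^^ Suc (length w)) (F 0) \<noteq> (grow ^^ length w) (F 0)"
    by (metis le_SucI order_refl)
qed

end

lemma funpow_moves:
  assumes "\<forall>k. 2 \<le> k \<and> k \<le> Suc t \<longrightarrow> \<not> word_property S k"
  shows "\<tau> ^^ Suc t \<noteq> \<tau> ^^ t"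
proof -
  have "\<not> word_property S (Suc t)"
  proof (cases t)
    case 0
    then show ?thesis
      by (auto simp: word_property_def subword_def)
  next
    case (Suc t')
    then show ?thesis
      using assms by simp
  qed
  then obtain w where "length w = t" "set w \<subseteq> S - {0}" "\<And>v. subword v w \<Longrightarrow> - theta v \<notin> S"
    unfolding word_property_def by auto
  then show ?thesis
    using funpow_moves_of_word by blast
qed

lemma finite_powers_set_iff_word_property:
  "finite (powers_set \<tau>) \<longleftrightarrow> (\<exists>n\<ge>2. word_property S n)"
  by (rule finite_powers_set_iff_threshold[OF no_cycle funpow_stops funpow_moves])

lemma ord_eq_least_word_property:
  "\<exists>n\<ge>2. word_property S n \<Longrightarrow> ord \<tau> = (LEAST n. 2 \<le> n \<and> word_property S n)"
  by (rule ord_eq_LEAST_threshold[OF no_cycle funpow_stops funpow_moves])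

end

lemma lazy_with_imp_lazy_ca:
  assumes "lazy_with \<tau> S \<mu> p"
  shows "lazy_ca \<tau> S p (\<mu> p)"
proof
  have local: "\<And>x g. \<tau> x g = \<mu> (restrict (shift g x) S)" and zero: "0 \<in> S"
    and p_ext: "p \<in> extensional S" and active: "\<forall>z \<in> extensional S. \<mu> z = z 0 \<longleftrightarrow> z \<noteq> p"
    using assms unfolding lazy_with_def local_defining_map_def by auto
  show "0 \<in> S"
    by (fact zero)
  show "\<mu> p \<noteq> p 0"
    using active p_ext by blast
  fix y g
  have "restrict (shift g y) S = p \<longleftrightarrow> (\<forall>s\<in>S. y (s + g) = p s)"
    using p_ext by (auto simp: shift_def fun_eq_iff extensional_def restrict_def)
  moreover have "\<mu> (restrict (shift g y) S) = y g" if "restrict (shift g y) S \<noteq> p"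
  proof -
    have "\<mu> (restrict (shift g y) S) = restrict (shift g y) S 0"
      using bspec[OF active restrict_extensional] that by blast
    then show ?thesis
      using zero by (simp add: shift_def)
  qed
  ultimately show "\<tau> y g = (if \<forall>s\<in>S. y (s + g) = p s then \<mu> p else y g)"
    by (auto simp: local)
qed

theorem theorem1:
  fixes \<tau> :: "('g::group_add \<Rightarrow> 'a) \<Rightarrow> ('g \<Rightarrow> 'a)"
    and S :: "'g set" and \<mu> :: "('g \<Rightarrow> 'a) \<Rightarrow> 'a" and p :: "'g \<Rightarrow> 'a"
    and a :: 'a and r :: 'g
  assumes two: "\<exists>x y :: 'a. x \<noteq> y"
    and lazy: "lazy_with \<tau> S \<mu> p"
    and a_def: "a = \<mu> p"
    and qc: "quasi_constant_at S p r"
  shows "((\<forall>s\<in>S. a \<noteq> p s) \<longrightarrow> ord \<tau> = 2)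
    \<and> (r \<noteq> 0 \<and> a = p r \<longrightarrow>
        (finite (powers_set \<tau>) \<longleftrightarrow> (\<exists>n\<ge>2. gpow n r \<in> S))
        \<and> ((\<exists>n\<ge>2. gpow n r \<in> S) \<longrightarrow> ord \<tau> = (LEAST n. n \<ge> 2 \<and> gpow n r \<in> S)))
    \<and> (r = 0 \<and> (\<forall>s\<in>S - {0}. a = p s) \<longrightarrow>
        (finite (powers_set \<tau>) \<longleftrightarrow> (\<exists>n\<ge>2. word_property S n))
        \<and> ((\<exists>n\<ge>2. word_property S n) \<longrightarrow> ord \<tau> = (LEAST n. n \<ge> 2 \<and> word_property S n)))"
proof -
  interpret lazy_ca \<tau> S p a
    using lazy_with_imp_lazy_ca[OF lazy] a_def by simp
  obtain c where r_in_S: "r \<in> S" and const: "\<And>s. s \<in> S - {r} \<Longrightarrow> p s = c"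
    using qc unfolding quasi_constant_at_def constant_on_set_def by blast
  have power_case: "(finite (powers_set \<tau>) \<longleftrightarrow> (\<exists>n\<ge>2. gpow n r \<in> S))
      \<and> ((\<exists>n\<ge>2. gpow n r \<in> S) \<longrightarrow> ord \<tau> = (LEAST n. n \<ge> 2 \<and> gpow n r \<in> S))"
    if "r \<noteq> 0" "a = p r"
  proof -
    interpret lazy_ca_power \<tau> S p a r
      using that r_in_S const[of 0] const zero_in_S by unfold_locales auto
    show ?thesis
      using finite_powers_set_iff_power_in_S ord_eq_least_power_in_S by simp
  qed
  have word_case: "(finite (powers_set \<tau>) \<longleftrightarrow> (\<exists>n\<ge>2. word_property S n))
      \<and> ((\<exists>n\<ge>2. word_property S n) \<longrightarrow> ord \<tau> = (LEAST n. n \<ge> 2 \<and> word_property S n))"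
    if "\<forall>s\<in>S - {0}. a = p s"
  proof -
    interpret lazy_ca_word \<tau> S p a
      using that by unfold_locales auto
    show ?thesis
      using finite_powers_set_iff_word_property ord_eq_least_word_property by simp
  qed
  show ?thesis
    using ord_eq_2_if_writing_not_in_pattern power_case word_case by blast
qed

end
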